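(* Let $\mathcal{X}$ be a finite set, $\pi$ a probability mass function on $\mathcal{X}$ with full support, $P$ a $\pi$-stationary transition matrix, and let a group $\mathcal{G}$ act on $\mathcal{X}$ with orbits $(\mathcal{O}_i)_{i=1}^k$ and Gibbs orbit kernel $G$. Then $D^\pi_{KL}(GPG\|\Pi)=D^{\overline{\pi}}_{KL}(\overline{P}\|\overline{\Pi})$.
   Context: $G(x,y)=\pi(y)/\pi(\mathcal{O}(x))$ for $y$ in the orbit $\mathcal{O}(x)$ of $x$, else $0$, with $\pi(A)=\sum_{z\in A}\pi(z)$. $\Pi$ is the matrix with every row equal to $\pi$. $\overline{\pi}=(\pi(\mathcal{O}_1),\dots,\pi(\mathcal{O}_k))$, $\overline{\Pi}$ is the $k\times k$ matrix with every row $\overline{\pi}$, and $\overline{P}(i,j)=\frac{1}{\pi(\mathcal{O}_i)}\sum_{x\in\mathcal{O}_i,y\in\mathcal{O}_j}\pi(x)P(x,y)$. For a distribution $\mu$ and transition matrices $K,L$ on the same finite set, $D^\mu_{KL}(K\|L)=\sum_{x,y}\mu(x)K(x,y)\log\frac{K(x,y)}{L(x,y)}$ with $0\log(0/a)=0$. *)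

theory Defs
  imports "HOL-Analysis.Analysis" "HOL-Algebra.Group_Action"
begin

text \<open>Transition matrices on a finite state set X are functions 'a => 'a => real,
  only their values on X x X matter.\<close>

definition pmf_full_support :: "'a set \<Rightarrow> ('a \<Rightarrow> real) \<Rightarrow> bool" where
  "pmf_full_support X \<pi> \<longleftrightarrow> (\<forall>x\<in>X. \<pi> x > 0) \<and> (\<Sum>x\<in>X. \<pi> x) = 1"

definition transition_matrix :: "'a set \<Rightarrow> ('a \<Rightarrow> 'a \<Rightarrow> real) \<Rightarrow> bool" where
  "transition_matrix X P \<longleftrightarrow> (\<forall>x\<in>X. \<forall>y\<in>X. P x y \<ge> 0) \<and> (\<forall>x\<in>X. (\<Sum>y\<in>X. P x y) = 1)"

definition stationary :: "'a set \<Rightarrow> ('a \<Rightarrow> real) \<Rightarrow> ('a \<Rightarrow> 'a \<Rightarrow> real) \<Rightarrow> bool" where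
  "stationary X \<pi> P \<longleftrightarrow> (\<forall>y\<in>X. (\<Sum>x\<in>X. \<pi> x * P x y) = \<pi> y)"

definition mass :: "('a \<Rightarrow> real) \<Rightarrow> 'a set \<Rightarrow> real" where
  "mass \<pi> A = (\<Sum>z\<in>A. \<pi> z)"

definition gibbs_orbit_kernel ::
  "('g, 'h) monoid_scheme \<Rightarrow> ('g \<Rightarrow> 'a \<Rightarrow> 'a) \<Rightarrow> ('a \<Rightarrow> real) \<Rightarrow> 'a \<Rightarrow> 'a \<Rightarrow> real" where
  "gibbs_orbit_kernel G \<phi> \<pi> x y =
     (if y \<in> orbit G \<phi> x then \<pi> y / mass \<pi> (orbit G \<phi> x) else 0)"

definition mat_prod :: "'a set \<Rightarrow> ('a \<Rightarrow> 'a \<Rightarrow> real) \<Rightarrow> ('a \<Rightarrow> 'a \<Rightarrow> real) \<Rightarrow> 'a \<Rightarrow> 'a \<Rightarrow> real" where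
  "mat_prod X K L x y = (\<Sum>z\<in>X. K x z * L z y)"

definition const_rows :: "('a \<Rightarrow> real) \<Rightarrow> 'a \<Rightarrow> 'a \<Rightarrow> real" where
  "const_rows \<mu> x y = \<mu> y"

definition KL_div :: "'a set \<Rightarrow> ('a \<Rightarrow> real) \<Rightarrow> ('a \<Rightarrow> 'a \<Rightarrow> real) \<Rightarrow> ('a \<Rightarrow> 'a \<Rightarrow> real) \<Rightarrow> real" where
  "KL_div X \<mu> K L = (\<Sum>x\<in>X. \<Sum>y\<in>X.
      (if K x y = 0 then 0 else \<mu> x * K x y * ln (K x y / L x y)))"

text \<open>Lumped quantities, indexed by the orbits themselves.\<close>
definition lumped_dist :: "('a \<Rightarrow> real) \<Rightarrow> 'a set \<Rightarrow> real" where
  "lumped_dist \<pi> A = mass \<pi> A"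

definition lumped_matrix :: "('a \<Rightarrow> real) \<Rightarrow> ('a \<Rightarrow> 'a \<Rightarrow> real) \<Rightarrow> 'a set \<Rightarrow> 'a set \<Rightarrow> real" where
  "lumped_matrix \<pi> P A B = (1 / mass \<pi> A) * (\<Sum>x\<in>A. \<Sum>y\<in>B. \<pi> x * P x y)"

end

theory Submission
  imports Defs
begin

text \<open>
  The kernel \<open>G P G\<close> depends on its arguments only through their orbits:
  \<open>(G P G)(x, y) = P\<^sub>O(O(x), O(y)) \<pi>(y) / \<pi>(O(y))\<close>, where \<open>P\<^sub>O\<close> is the lumped matrix.
  Hence the summand of \<open>D\<^sup>\<pi>(G P G \<parallel> \<Pi>)\<close> at \<open>(x, y)\<close> is \<open>\<pi>(x) \<pi>(y) / \<pi>(O(y))\<close> times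
  \<open>P\<^sub>O log (P\<^sub>O / \<pi>(O(y)))\<close>, and summing \<open>\<pi>\<close> over each orbit collapses the double sum
  over \<open>X\<close> into the double sum over orbits defining the lumped divergence.
\<close>

lemma sum_partition_on_class:
  assumes "finite X" and "partition_on X \<A>"
    and cls: "\<And>A x. A \<in> \<A> \<Longrightarrow> x \<in> A \<Longrightarrow> cls x = A"
  shows "(\<Sum>x\<in>X. \<pi> x * g (cls x)) = (\<Sum>A\<in>\<A>. mass \<pi> A * g A)"
proof -
  have X: "X = \<Union>\<A>" and "disjoint \<A>"
    using assms(2) by (auto dest: partition_onD1 partition_onD2)
  then have "\<forall>A\<in>\<A>. finite A" and "\<forall>A\<in>\<A>. \<forall>B\<in>\<A>. A \<noteq> B \<longrightarrow> A \<inter> B = {}"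
    using \<open>finite X\<close> by (auto intro: finite_subset dest: disjointD)
  then have "(\<Sum>x\<in>X. \<pi> x * g (cls x)) = (\<Sum>A\<in>\<A>. \<Sum>x\<in>A. \<pi> x * g (cls x))"
    unfolding X by (simp add: sum.Union_disjoint)
  also have "\<dots> = (\<Sum>A\<in>\<A>. \<Sum>x\<in>A. \<pi> x * g A)"
    using cls by (intro sum.cong refl) simp
  finally show ?thesis
    by (simp add: mass_def sum_distrib_right)
qed

lemma KL_div_const_rows_lumped:
  assumes "finite X" and partition: "partition_on X \<A>"
    and cls: "\<And>A x. A \<in> \<A> \<Longrightarrow> x \<in> A \<Longrightarrow> cls x = A"
    and pos: "\<And>x. x \<in> X \<Longrightarrow> \<pi> x > 0"
    and K: "\<And>x y. x \<in> X \<Longrightarrow> y \<in> X \<Longrightarrow> K x y = Q (cls x) (cls y) * \<pi> y / mass \<pi> (cls y)"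
  shows "KL_div X \<pi> K (const_rows \<pi>) = KL_div \<A> (mass \<pi>) Q (const_rows (mass \<pi>))"
proof -
  define c where "c A B = (if Q A B = 0 then 0 else Q A B * ln (Q A B / mass \<pi> B))" for A B
  have X: "X = \<Union>\<A>" and nonempty: "{} \<notin> \<A>"
    using partition by (auto dest: partition_onD1 partition_onD3)
  have mass_pos: "mass \<pi> A > 0" if "A \<in> \<A>" for A
    unfolding mass_def using that X nonempty pos \<open>finite X\<close>
    by (intro sum_pos) (auto intro: finite_subset)
  have summand: "(if K x y = 0 then 0 else \<pi> x * K x y * ln (K x y / const_rows \<pi> x y))
      = \<pi> x * (\<pi> y * (c (cls x) (cls y) / mass \<pi> (cls y)))" if "x \<in> X" "y \<in> X" for x y
  proof -
    have "cls y \<in> \<A>"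
      using that X cls by auto
    then have "\<pi> y > 0" "mass \<pi> (cls y) > 0"
      using that pos mass_pos by auto
    then show ?thesis
      unfolding K[OF that] c_def const_rows_def by (simp add: field_simps)
  qed
  have "KL_div X \<pi> K (const_rows \<pi>)
      = (\<Sum>x\<in>X. \<pi> x * (\<Sum>y\<in>X. \<pi> y * (c (cls x) (cls y) / mass \<pi> (cls y))))"
    unfolding KL_div_def sum_distrib_left by (intro sum.cong refl) (simp add: summand)
  also have "\<dots> = (\<Sum>x\<in>X. \<pi> x * (\<Sum>B\<in>\<A>. mass \<pi> B * (c (cls x) B / mass \<pi> B)))"
    by (intro sum.cong refl arg_cong2[where f = "(*)"]
        sum_partition_on_class[OF \<open>finite X\<close> partition cls, where g = "\<lambda>B. c (cls _) B / mass \<pi> B"])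
  also have "\<dots> = (\<Sum>A\<in>\<A>. mass \<pi> A * (\<Sum>B\<in>\<A>. mass \<pi> B * (c A B / mass \<pi> B)))"
    by (rule sum_partition_on_class[OF \<open>finite X\<close> partition cls])
  also have "\<dots> = KL_div \<A> (mass \<pi>) Q (const_rows (mass \<pi>))"
    unfolding KL_div_def const_rows_def sum_distrib_left
    by (intro sum.cong refl) (auto simp: c_def dest!: mass_pos)
  finally show ?thesis .
qed

context group_action
begin

lemma orbit_subset: "x \<in> E \<Longrightarrow> orbit G \<phi> x \<subseteq> E"
  using element_image unfolding orbit_def by blast

lemma orbit_eq_of_mem:
  assumes "y \<in> E" and "x \<in> orbit G \<phi> y"
  shows "orbit G \<phi> x = orbit G \<phi> y"
proof -
  have "x \<in> E"
    using assms orbit_subset by blast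
  then show ?thesis
    using assms orbit_subset orbit_sym orbit_trans by (intro subset_antisym subsetI) blast+
qed

lemma partition_on_orbits: "partition_on E (orbits G E \<phi>)"
proof (rule partition_onI[OF orbits_coverture])
  show "disjnt p q" if "p \<in> orbits G E \<phi>" "q \<in> orbits G E \<phi>" "p \<noteq> q" for p q
    using that disjoint_union unfolding disjnt_def by blast
  show "{} \<notin> orbits G E \<phi>"
    unfolding orbits_def using orbit_refl by blast
qed

lemma mat_prod_gibbs_orbit_kernel_left:
  assumes "finite E" and "x \<in> E"
  shows "mat_prod E (gibbs_orbit_kernel G \<phi> \<pi>) K x w
    = (\<Sum>z\<in>orbit G \<phi> x. \<pi> z * K z w) / mass \<pi> (orbit G \<phi> x)"
proof -
  have "orbit G \<phi> x \<subseteq> E"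
    using assms(2) by (rule orbit_subset)
  have "mat_prod E (gibbs_orbit_kernel G \<phi> \<pi>) K x w
      = (\<Sum>z\<in>E. if z \<in> orbit G \<phi> x then \<pi> z * K z w / mass \<pi> (orbit G \<phi> x) else 0)"
    unfolding mat_prod_def gibbs_orbit_kernel_def by (intro sum.cong) auto
  then show ?thesis
    using \<open>finite E\<close> \<open>orbit G \<phi> x \<subseteq> E\<close>
    by (simp add: sum.If_cases Int_absorb1 sum_divide_distrib)
qed

lemma mat_prod_gibbs_orbit_kernel_right:
  assumes "finite E" and "y \<in> E"
  shows "mat_prod E K (gibbs_orbit_kernel G \<phi> \<pi>) x y
    = (\<Sum>w\<in>orbit G \<phi> y. K x w) * \<pi> y / mass \<pi> (orbit G \<phi> y)"
proof -
  have "orbit G \<phi> y \<subseteq> E"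
    using assms(2) by (rule orbit_subset)
  have "gibbs_orbit_kernel G \<phi> \<pi> w y
      = (if w \<in> orbit G \<phi> y then \<pi> y / mass \<pi> (orbit G \<phi> y) else 0)" if "w \<in> E" for w
  proof (cases "w \<in> orbit G \<phi> y")
    case True
    then show ?thesis
      using orbit_sym[OF assms(2) that] orbit_eq_of_mem[OF assms(2) True]
      unfolding gibbs_orbit_kernel_def by simp
  next
    case False
    then have "y \<notin> orbit G \<phi> w"
      using orbit_sym[OF that assms(2)] by blast
    then show ?thesis
      using False unfolding gibbs_orbit_kernel_def by simp
  qed
  then have "mat_prod E K (gibbs_orbit_kernel G \<phi> \<pi>) x y
      = (\<Sum>w\<in>E. if w \<in> orbit G \<phi> y then K x w * (\<pi> y / mass \<pi> (orbit G \<phi> y)) else 0)"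
    unfolding mat_prod_def by (intro sum.cong) auto
  also have "\<dots> = (\<Sum>w\<in>orbit G \<phi> y. K x w) * (\<pi> y / mass \<pi> (orbit G \<phi> y))"
    using \<open>finite E\<close> \<open>orbit G \<phi> y \<subseteq> E\<close>
    by (simp add: sum.If_cases Int_absorb1 sum_distrib_right sum_divide_distrib)
  finally show ?thesis
    by simp
qed

lemma gibbs_orbit_kernel_sandwich:
  assumes "finite E" and "x \<in> E" and "y \<in> E"
  shows "mat_prod E (mat_prod E (gibbs_orbit_kernel G \<phi> \<pi>) P) (gibbs_orbit_kernel G \<phi> \<pi>) x y
    = lumped_matrix \<pi> P (orbit G \<phi> x) (orbit G \<phi> y) * \<pi> y / mass \<pi> (orbit G \<phi> y)"
  unfolding mat_prod_gibbs_orbit_kernel_right[OF assms(1,3)]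
    mat_prod_gibbs_orbit_kernel_left[OF assms(1,2)] lumped_matrix_def
  by (simp add: sum_divide_distrib[symmetric] sum.swap[of _ "orbit G \<phi> y"])

end

theorem proposition6p3:
  fixes X :: "'a set" and \<pi> :: "'a \<Rightarrow> real" and P :: "'a \<Rightarrow> 'a \<Rightarrow> real"
    and G :: "('g, 'h) monoid_scheme" and \<phi> :: "'g \<Rightarrow> 'a \<Rightarrow> 'a"
  assumes "finite X"
    and "pmf_full_support X \<pi>"
    and "transition_matrix X P"
    and "stationary X \<pi> P"
    and "group G"
    and "group_action G X \<phi>"
  shows "KL_div X \<pi>
           (mat_prod X (mat_prod X (gibbs_orbit_kernel G \<phi> \<pi>) P) (gibbs_orbit_kernel G \<phi> \<pi>))
           (const_rows \<pi>)
       = KL_div (orbits G X \<phi>) (lumped_dist \<pi>)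
           (lumped_matrix \<pi> P) (const_rows (lumped_dist \<pi>))"
proof -
  interpret group_action G X \<phi> by fact
  have lumped_dist: "lumped_dist \<pi> = mass \<pi>"
    by (simp add: lumped_dist_def fun_eq_iff)
  show ?thesis
    unfolding lumped_dist
  proof (rule KL_div_const_rows_lumped[where cls = "orbit G \<phi>"])
    show "finite X" by fact
    show "partition_on X (orbits G X \<phi>)"
      by (rule partition_on_orbits)
    show "orbit G \<phi> x = A" if "A \<in> orbits G X \<phi>" and "x \<in> A" for A x
      using that orbit_eq_of_mem unfolding orbits_def by blast
    show "\<pi> x > 0" if "x \<in> X" for x
      using that assms(2) by (simp add: pmf_full_support_def)
  qed (rule gibbs_orbit_kernel_sandwich[OF \<open>finite X\<close>])
qed

end
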